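(* Let $\chi$ be a kernel as described in the context with $m_1(\chi,u)=0$ for all $u\in\mathbb{R}^+$. Let $f\in C^{(2)}(\mathbb{R}^+)$ and suppose $$\|I_w^{\chi}f-f\|_\infty=o(w^{-1})\quad\text{as } w\to+\infty.$$ Then $f$ is constant on $\mathbb{R}^+$.
   Context: A kernel is a continuous function $\chi:\mathbb{R}^+\to\mathbb{R}$ satisfying: (i) $\sum_{k=-\infty}^{+\infty}\chi(e^{-k}u)=1$ for every $u\in\mathbb{R}^+$; (ii) $M_2(\chi)<+\infty$ and $\lim_{\gamma\to+\infty}\sum_{|k-\log u|>\gamma}|\chi(e^{-k}u)|\,|k-\log u|^2=0$ uniformly with respect to $u\in\mathbb{R}^+$. Algebraic moments: $m_\nu(\chi,u)=\sum_{k\in\mathbb{Z}}\chi(e^{-k}u)(k-\log u)^\nu$; absolute moments: $M_\nu(\chi,u)=\sum_{k\in\mathbb{Z}}|\chi(e^{-k}u)|\,|k-\log u|^\nu$, $M_\nu(\chi)=\sup_{u>0}M_\nu(\chi,u)$. For $w>0$, $x\in\mathbb{R}^+$: $(I_w^{\chi}f)(x)=\sum_{k\in\mathbb{Z}}\chi(e^{-k}x^w)\,w\int_{k/w}^{(k+1)/w}f(e^u)\,du$; $\|\cdot\|_\infty$ is the sup norm on $\mathbb{R}^+$. Mellin differential operator: $(\theta f)(x)=xf'(x)$, $\theta^r=\theta(\theta^{r-1})$. $C(\mathbb{R}^+)$ denotes the bounded continuous functions on $\mathbb{R}^+$, and $C^{(2)}(\mathbb{R}^+)$ the $f\in C(\mathbb{R}^+)$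 such that $\theta f$ and $\theta^2 f$ exist and belong to $C(\mathbb{R}^+)$. *)

theory Defs
  imports "HOL-Analysis.Analysis"
begin

definition abs_moment :: "nat \<Rightarrow> (real \<Rightarrow> real) \<Rightarrow> real \<Rightarrow> real" where
  "abs_moment \<nu> K u = infsum (\<lambda>k::int. \<bar>K (exp (- real_of_int k) * u)\<bar> * \<bar>real_of_int k - ln u\<bar> ^ \<nu>) UNIV"

definition alg_moment :: "nat \<Rightarrow> (real \<Rightarrow> real) \<Rightarrow> real \<Rightarrow> real" where
  "alg_moment \<nu> K u = infsum (\<lambda>k::int. K (exp (- real_of_int k) * u) * (real_of_int k - ln u) ^ \<nu>) UNIV"

text \<open>Kernel: continuous on R+, conditions (i) and (ii).
  M_2(chi) < infinity is stated as: each series defining M_2(chi,u) converges and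
  the values are uniformly bounded over u > 0.\<close>
definition is_kernel :: "(real \<Rightarrow> real) \<Rightarrow> bool" where
  "is_kernel K \<longleftrightarrow>
     continuous_on {0<..} K \<and>
     (\<forall>u>0. ((\<lambda>k::int. K (exp (- real_of_int k) * u)) has_sum 1) UNIV) \<and>
     (\<forall>u>0. (\<lambda>k::int. \<bar>K (exp (- real_of_int k) * u)\<bar> * \<bar>real_of_int k - ln u\<bar> ^ 2) summable_on UNIV) \<and>
     (\<exists>B. \<forall>u>0. abs_moment 2 K u \<le> B) \<and>
     (\<forall>\<epsilon>>0. \<exists>\<gamma>0. \<forall>\<gamma>\<ge>\<gamma>0. \<forall>u>0.
        infsum (\<lambda>k::int. \<bar>K (exp (- real_of_int k) * u)\<bar> * \<bar>real_of_int k - ln u\<bar> ^ 2)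
           {k::int. \<bar>real_of_int k - ln u\<bar> > \<gamma>} < \<epsilon>)"

definition kantorovich_op :: "(real \<Rightarrow> real) \<Rightarrow> real \<Rightarrow> (real \<Rightarrow> real) \<Rightarrow> real \<Rightarrow> real" where
  "kantorovich_op K w f x =
     infsum (\<lambda>k::int. K (exp (- real_of_int k) * x powr w) *
        (w * integral {real_of_int k / w .. (real_of_int k + 1) / w} (\<lambda>u. f (exp u)))) UNIV"

definition bcont_pos :: "(real \<Rightarrow> real) \<Rightarrow> bool" where
  "bcont_pos g \<longleftrightarrow> continuous_on {0<..} g \<and> (\<exists>B. \<forall>x>0. \<bar>g x\<bar> \<le> B)"

text \<open>C^(2)(R+): f, theta f = x f', theta^2 f exist and are bounded continuous on R+.\<close>
definition C2_mellin :: "(real \<Rightarrow> real) \<Rightarrow> bool" where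
  "C2_mellin f \<longleftrightarrow> bcont_pos f \<and>
     (\<exists>\<theta>1 \<theta>2. (\<forall>x>0. (f has_real_derivative (\<theta>1 x / x)) (at x)) \<and>
              (\<forall>x>0. (\<theta>1 has_real_derivative (\<theta>2 x / x)) (at x)) \<and>
              bcont_pos \<theta>1 \<and> bcont_pos \<theta>2)"

end

theory Submission
  imports Defs
begin

text \<open>In logarithmic coordinates, with g v = f (exp v) and t = ln x, the operator averages g over
  the cells [k/w, (k+1)/w] with the weights K (exp (-k) * x powr w). Expanding g to second order
  at t, the weights sum to 1, their first moment about w t vanishes and their second absolute
  moment is bounded, so only the offset 1/2 of the cell midpoints survives: this is the
  Voronovskaja formula  I_w f x = f x + (theta f) x / (2 w) + O(1 / w^2).  If I_w f - f = o(1/w)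
  uniformly, then theta f = x f' vanishes identically, hence f is constant.\<close>

lemma taylor_second_order_bound:
  fixes g g' g'' :: "real \<Rightarrow> real"
  assumes g': "\<And>x. (g has_real_derivative g' x) (at x)"
    and g'': "\<And>x. (g' has_real_derivative g'' x) (at x)"
    and bound: "\<And>x. \<bar>g'' x\<bar> \<le> L"
  shows "\<bar>g x - g t - g' t * (x - t)\<bar> \<le> L / 2 * (x - t)\<^sup>2"
proof (cases "x = t")
  case False
  define diff where "diff m = (if m = 0 then g else if m = 1 then g' else g'')" for m :: nat
  have "\<forall>m y. m < 2 \<and> min x t \<le> y \<and> y \<le> max x t \<longrightarrow> (diff m has_real_derivative diff (Suc m) y) (at y)"
    using g' g'' by (auto simp: diff_def less_2_cases_iff)
  then obtain \<xi> where "g x = (\<Sum>m<2. diff m t / fact m * (x - t) ^ m) + diff 2 \<xi> / fact 2 * (x - t)\<^sup>2"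
    using Taylor[of 2 diff g "min x t" "max x t" t x] False by (auto simp: diff_def)
  then have remainder: "g x - g t - g' t * (x - t) = g'' \<xi> / 2 * (x - t)\<^sup>2"
    by (simp add: diff_def numeral_2_eq_2)
  have "\<bar>g x - g t - g' t * (x - t)\<bar> = \<bar>g'' \<xi>\<bar> / 2 * (x - t)\<^sup>2"
    unfolding remainder by (simp add: abs_mult)
  also have "\<dots> \<le> L / 2 * (x - t)\<^sup>2"
    using bound[of \<xi>] by (intro mult_right_mono) auto
  finally show ?thesis .
qed simp

lemma integral_affine_approx:
  fixes g :: "real \<Rightarrow> real"
  assumes "continuous_on {a..b} g" and "a \<le> b" and "0 \<le> B"
    and approx: "\<And>x. x \<in> {a..b} \<Longrightarrow> \<bar>g x - c - D * (x - t)\<bar> \<le> B * (x - t)\<^sup>2"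
  shows "\<bar>integral {a..b} g - (b - a) * (c + D * ((a + b) / 2 - t))\<bar>
           \<le> B * ((a - t)\<^sup>2 + (b - t)\<^sup>2) * (b - a)"
proof -
  define P where "P x = c * x + D * (x - t)\<^sup>2 / 2" for x
  have "((\<lambda>x. c + D * (x - t)) has_integral P b - P a) {a..b}"
  proof (rule fundamental_theorem_of_calculus[OF \<open>a \<le> b\<close>])
    fix x
    have "(P has_real_derivative c + D * (x - t)) (at x)"
      unfolding P_def by (auto intro!: derivative_eq_intros)
    then show "(P has_vector_derivative c + D * (x - t)) (at x within {a..b})"
      by (simp add: has_real_derivative_iff_has_vector_derivative has_vector_derivative_at_within)
  qed
  moreover have "P b - P a = (b - a) * (c + D * ((a + b) / 2 - t))"
    by (simp add: P_def power2_eq_square field_simps)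
  ultimately have affine: "((\<lambda>x. c + D * (x - t)) has_integral (b - a) * (c + D * ((a + b) / 2 - t))) {a..b}"
    by simp
  have "(g has_integral integral {a..b} g) {a..b}"
    using assms(1) by (intro integrable_integral integrable_continuous_interval)
  from has_integral_diff[OF this affine]
  have remainder_integral: "((\<lambda>x. g x - (c + D * (x - t))) has_integral
      integral {a..b} g - (b - a) * (c + D * ((a + b) / 2 - t))) {a..b}" .
  have remainder_le: "norm (g x - (c + D * (x - t))) \<le> B * ((a - t)\<^sup>2 + (b - t)\<^sup>2)"
    if x: "x \<in> cbox a b" for x
  proof -
    have "(x - t)\<^sup>2 \<le> (a - t)\<^sup>2 + (b - t)\<^sup>2"
    proof (cases "x \<le> t")
      case True
      then have "(t - x)\<^sup>2 \<le> (t - a)\<^sup>2" using x by (intro power_mono) auto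
      then have "(x - t)\<^sup>2 \<le> (a - t)\<^sup>2" by (simp only: power2_commute)
      then show ?thesis using zero_le_power2[of "b - t"] by linarith
    next
      case False
      then have "(x - t)\<^sup>2 \<le> (b - t)\<^sup>2" using x by (intro power_mono) auto
      then show ?thesis using zero_le_power2[of "a - t"] by linarith
    qed
    then have "B * (x - t)\<^sup>2 \<le> B * ((a - t)\<^sup>2 + (b - t)\<^sup>2)"
      using \<open>0 \<le> B\<close> by (rule mult_left_mono)
    moreover have "norm (g x - (c + D * (x - t))) = \<bar>g x - c - D * (x - t)\<bar>"
      by simp
    ultimately show ?thesis
      using approx[of x] x by simp
  qed
  from has_integral_bound[OF _ remainder_integral[folded box_real(2)] remainder_le] show ?thesis
    using \<open>a \<le> b\<close> \<open>0 \<le> B\<close> by simp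
qed

lemma cell_average_approx:
  fixes g :: "real \<Rightarrow> real" and k :: real
  assumes w: "w > 0" and "0 \<le> B" and "continuous_on UNIV g"
    and approx: "\<And>x. \<bar>g x - c - D * (x - t)\<bar> \<le> B * (x - t)\<^sup>2"
  shows "\<bar>w * integral {k / w..(k + 1) / w} g - (c + D / (2 * w)) - D / w * (k - w * t)\<bar>
           \<le> 3 * B / w\<^sup>2 * ((k - w * t)\<^sup>2 + 1)"
proof -
  define d where "d = k - w * t"
  have ends: "k / w - t = d / w" "(k + 1) / w - t = (d + 1) / w" "(k + 1) / w - k / w = 1 / w"
    "(k / w + (k + 1) / w) / 2 - t = (d + 1 / 2) / w"
    using w by (simp_all add: d_def field_simps)
  have "k / w \<le> (k + 1) / w"
    using w by (simp add: divide_right_mono)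
  from integral_affine_approx[OF continuous_on_subset[OF assms(3)] this \<open>0 \<le> B\<close> approx]
  have integral_le: "\<bar>integral {k / w..(k + 1) / w} g - 1 / w * (c + D * ((d + 1 / 2) / w))\<bar>
      \<le> B * ((d / w)\<^sup>2 + ((d + 1) / w)\<^sup>2) * (1 / w)"
    unfolding ends by simp
  have "w * (integral {k / w..(k + 1) / w} g - 1 / w * (c + D * ((d + 1 / 2) / w)))
      = w * integral {k / w..(k + 1) / w} g - (c + D / (2 * w)) - D / w * d"
    using w by (simp add: field_simps)
  then have "\<bar>w * integral {k / w..(k + 1) / w} g - (c + D / (2 * w)) - D / w * d\<bar>
      = w * \<bar>integral {k / w..(k + 1) / w} g - 1 / w * (c + D * ((d + 1 / 2) / w))\<bar>"
    using w by (metis abs_mult abs_of_pos)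
  also have "\<dots> \<le> B / w\<^sup>2 * (d\<^sup>2 + (d + 1)\<^sup>2)"
    using integral_le w by (simp add: field_simps power2_eq_square)
  also have "\<dots> \<le> 3 * B / w\<^sup>2 * (d\<^sup>2 + 1)"
  proof -
    have "d\<^sup>2 + (d + 1)\<^sup>2 \<le> 3 * (d\<^sup>2 + 1)"
      using sum_squares_ge_zero[of "d - 1" 0] by (simp add: power2_eq_square algebra_simps)
    then have "B / w\<^sup>2 * (d\<^sup>2 + (d + 1)\<^sup>2) \<le> B / w\<^sup>2 * (3 * (d\<^sup>2 + 1))"
      using \<open>0 \<le> B\<close> by (intro mult_left_mono) auto
    then show ?thesis
      by (simp add: algebra_simps add_divide_distrib)
  qed
  finally show ?thesis
    by (simp add: d_def)
qed

lemma infsum_weighted_affine_approx: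
  fixes a I :: "int \<Rightarrow> real"
  assumes sum1: "(a has_sum 1) UNIV"
    and moment1: "infsum (\<lambda>k. a k * (of_int k - s)) UNIV = 0"
    and moment2: "(\<lambda>k. \<bar>a k\<bar> * ((of_int k - s)\<^sup>2 + 1)) summable_on UNIV"
    and moment2_le: "infsum (\<lambda>k. \<bar>a k\<bar> * ((of_int k - s)\<^sup>2 + 1)) UNIV \<le> M"
    and approx: "\<And>k. \<bar>I k - c - \<beta> * (of_int k - s)\<bar> \<le> B * ((of_int k - s)\<^sup>2 + 1)"
    and "0 \<le> B"
  shows "\<bar>infsum (\<lambda>k. a k * I k) UNIV - c\<bar> \<le> B * M"
proof -
  define E where "E k = a k * (I k - c - \<beta> * (of_int k - s))" for k
  have abs_moment1: "(\<lambda>k. norm (a k * (of_int k - s))) summable_on UNIV"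
  proof (rule summable_on_comparison_test[OF moment2])
    fix k
    have "\<bar>y\<bar> \<le> y\<^sup>2 + 1" for y :: real
    proof -
      have "0 \<le> (\<bar>y\<bar> - 1)\<^sup>2"
        by simp
      then show ?thesis
        by (simp add: power2_eq_square algebra_simps abs_mult_self_eq)
    qed
    then have "\<bar>of_int k - s\<bar> \<le> (of_int k - s)\<^sup>2 + 1" .
    then show "norm (a k * (of_int k - s)) \<le> \<bar>a k\<bar> * ((of_int k - s)\<^sup>2 + 1)"
      by (simp add: abs_mult mult_left_mono)
  qed simp
  have moment1_sum: "((\<lambda>k. a k * (of_int k - s)) has_sum 0) UNIV"
    using has_sum_infsum[OF summable_on_iff_abs_summable_on_real[THEN iffD2, OF abs_moment1]] moment1
    by simp
  have E_le: "norm (E k) \<le> B * (\<bar>a k\<bar> * ((of_int k - s)\<^sup>2 + 1))" for k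
  proof -
    have "norm (E k) = \<bar>a k\<bar> * \<bar>I k - c - \<beta> * (of_int k - s)\<bar>"
      by (simp add: E_def abs_mult)
    also have "\<dots> \<le> \<bar>a k\<bar> * (B * ((of_int k - s)\<^sup>2 + 1))"
      by (rule mult_left_mono[OF approx abs_ge_zero])
    finally show ?thesis
      by (simp add: ac_simps)
  qed
  have B_moment2: "(\<lambda>k. B * (\<bar>a k\<bar> * ((of_int k - s)\<^sup>2 + 1))) summable_on UNIV"
    using moment2 by (rule summable_on_cmult_right)
  have norm_E: "(\<lambda>k. norm (E k)) summable_on UNIV"
    by (rule summable_on_comparison_test[OF B_moment2 E_le]) simp
  then have "(E has_sum infsum E UNIV) UNIV"
    by (rule has_sum_infsum[OF summable_on_iff_abs_summable_on_real[THEN iffD2]])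
  with has_sum_cmult_right[OF sum1, of c] has_sum_cmult_right[OF moment1_sum, of \<beta>]
  have "((\<lambda>k. c * a k + \<beta> * (a k * (of_int k - s)) + E k) has_sum c * 1 + \<beta> * 0 + infsum E UNIV) UNIV"
    by (intro has_sum_add)
  moreover have "c * a k + \<beta> * (a k * (of_int k - s)) + E k = a k * I k" for k
    by (simp add: E_def algebra_simps)
  ultimately have "\<bar>infsum (\<lambda>k. a k * I k) UNIV - c\<bar> = \<bar>infsum E UNIV\<bar>"
    by (simp add: infsumI)
  also have "\<dots> \<le> infsum (\<lambda>k. norm (E k)) UNIV"
    using norm_infsum_bound[of E UNIV] norm_E by simp
  also have "\<dots> \<le> infsum (\<lambda>k. B * (\<bar>a k\<bar> * ((of_int k - s)\<^sup>2 + 1))) UNIV"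
    by (rule infsum_mono[OF norm_E B_moment2 E_le])
  also have "\<dots> \<le> B * M"
    using moment2_le \<open>0 \<le> B\<close> by (simp add: infsum_cmult_right' mult_left_mono)
  finally show ?thesis .
qed

lemma kernel_bounded_near_one:
  fixes K :: "real \<Rightarrow> real"
  assumes "continuous_on {0<..} K"
  obtains C where "\<And>y. y \<in> {exp (-1)..exp 1} \<Longrightarrow> \<bar>K y\<bar> \<le> C"
proof -
  have "{exp (-1)..exp 1} \<subseteq> {0::real<..}"
  proof
    fix y :: real
    assume "y \<in> {exp (-1)..exp 1}"
    then have "exp (-1) \<le> y"
      by simp
    then show "y \<in> {0<..}"
      using exp_gt_zero[of "-1"] by (simp del: exp_gt_zero)
  qed
  from assms this have "continuous_on {exp (-1)..exp 1} K"
    by (rule continuous_on_subset)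
  then have "bounded (K ` {exp (-1)..exp 1})"
    by (intro compact_imp_bounded compact_continuous_image) auto
  then obtain C where "\<forall>z \<in> K ` {exp (-1)..exp 1}. \<bar>z\<bar> \<le> C"
    unfolding bounded_iff by auto
  then show ?thesis
    using that by blast
qed

lemma abs_kernel_sample_le:
  fixes K :: "real \<Rightarrow> real" and k :: int
  assumes C: "\<And>y. y \<in> {exp (-1)..exp 1} \<Longrightarrow> \<bar>K y\<bar> \<le> C" and u: "u > 0"
  shows "\<bar>K (exp (- of_int k) * u)\<bar>
           \<le> \<bar>K (exp (- of_int k) * u)\<bar> * (of_int k - ln u)\<^sup>2
             + (if k \<in> {\<lfloor>ln u\<rfloor>, \<lfloor>ln u\<rfloor> + 1} then C else 0)"
proof (cases "k \<in> {\<lfloor>ln u\<rfloor>, \<lfloor>ln u\<rfloor> + 1}")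
  case True
  then have "\<bar>ln u - of_int k\<bar> \<le> 1"
    by auto linarith+
  moreover have "exp (- of_int k) * u = exp (ln u - of_int k)"
    using u by (simp add: exp_diff exp_minus field_simps)
  ultimately have "exp (- of_int k) * u \<in> {exp (-1)..exp 1}"
    by (simp add: abs_le_iff)
  with True show ?thesis
    using C[of "exp (- of_int k) * u"] zero_le_power2[of "of_int k - ln u"]
    by (simp add: add_increasing)
next
  case False
  then have "k + 1 \<le> \<lfloor>ln u\<rfloor> \<or> \<lfloor>ln u\<rfloor> < k - 1"
    by auto
  then have "of_int (k + 1) \<le> ln u \<or> ln u < of_int (k - 1)"
    by (simp only: le_floor_iff floor_less_iff)
  then have "1 \<le> \<bar>of_int k - ln u\<bar>"
    by auto
  then have "1 \<le> (of_int k - ln u)\<^sup>2"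
    using one_le_power[of "\<bar>of_int k - ln u\<bar>" 2] by simp
  with False show ?thesis
    by (simp add: mult_le_cancel_left1)
qed

lemma kernel_abs_moment_bound:
  fixes K :: "real \<Rightarrow> real"
  assumes "is_kernel K"
  obtains M where
    "\<And>u. u > 0 \<Longrightarrow> (\<lambda>k::int. \<bar>K (exp (- of_int k) * u)\<bar> * ((of_int k - ln u)\<^sup>2 + 1)) summable_on UNIV"
    "\<And>u. u > 0 \<Longrightarrow> infsum (\<lambda>k::int. \<bar>K (exp (- of_int k) * u)\<bar> * ((of_int k - ln u)\<^sup>2 + 1)) UNIV \<le> M"
proof -
  obtain B where B: "\<And>u. u > 0 \<Longrightarrow> abs_moment 2 K u \<le> B"
    using assms by (auto simp: is_kernel_def)
  obtain C where C: "\<And>y. y \<in> {exp (-1)..exp 1} \<Longrightarrow> \<bar>K y\<bar> \<le> C"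
    using kernel_bounded_near_one assms by (auto simp: is_kernel_def)
  have "0 \<le> C"
    using C[of 1] by (auto intro: order_trans[OF abs_ge_zero])
  have "(\<lambda>k::int. \<bar>K (exp (- of_int k) * u)\<bar> * ((of_int k - ln u)\<^sup>2 + 1)) summable_on UNIV \<and>
        infsum (\<lambda>k::int. \<bar>K (exp (- of_int k) * u)\<bar> * ((of_int k - ln u)\<^sup>2 + 1)) UNIV \<le> 2 * B + 2 * C"
    if u: "u > 0" for u
  proof -
    define a where "a = (\<lambda>k::int. \<bar>K (exp (- of_int k) * u)\<bar>)"
    define q where "q = (\<lambda>k::int. a k * (of_int k - ln u)\<^sup>2)"
    define S where "S = {\<lfloor>ln u\<rfloor>, \<lfloor>ln u\<rfloor> + 1}"
    define c where "c = (\<lambda>k. if k \<in> S then C else 0)"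
    have q: "q summable_on UNIV" "infsum q UNIV \<le> B"
      using assms B[OF u] u by (simp_all add: is_kernel_def abs_moment_def q_def a_def)
    have "(\<lambda>k::int. K (exp (- of_int k) * u)) summable_on UNIV"
      using assms u by (auto simp: is_kernel_def summable_on_def)
    then have a: "a summable_on UNIV"
      using summable_on_iff_abs_summable_on_real[THEN iffD1] by (simp add: a_def)
    have "c summable_on UNIV \<longleftrightarrow> c summable_on S"
      by (rule summable_on_cong_neutral) (auto simp: c_def)
    then have c: "c summable_on UNIV"
      by (simp add: S_def)
    have "infsum c UNIV = infsum c S"
      by (rule infsum_cong_neutral) (auto simp: c_def)
    also have "\<dots> \<le> 2 * C"
      using \<open>0 \<le> C\<close> by (simp add: S_def c_def)
    finally have c_le: "infsum c UNIV \<le> 2 * C" .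
    have "a k \<le> q k + c k" for k
      using abs_kernel_sample_le[where K = K and k = k, OF C u] by (simp add: a_def q_def c_def S_def)
    then have "infsum a UNIV \<le> infsum q UNIV + infsum c UNIV"
      using infsum_mono[OF a summable_on_add[OF q(1) c]] infsum_add[OF q(1) c] by simp
    moreover have "(\<lambda>k::int. \<bar>K (exp (- of_int k) * u)\<bar> * ((of_int k - ln u)\<^sup>2 + 1)) = (\<lambda>k. q k + a k)"
      by (auto simp: q_def a_def algebra_simps)
    ultimately show ?thesis
      using infsum_add[OF q(1) a] summable_on_add[OF q(1) a] q(2) c_le by simp
  qed
  then show ?thesis
    using that by blast
qed

lemma has_real_derivative_comp_exp:
  assumes "\<And>x. x > 0 \<Longrightarrow> (f has_real_derivative h x / x) (at x)"
  shows "((\<lambda>v. f (exp v)) has_real_derivative h (exp v)) (at v)"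
  using DERIV_chain'[OF DERIV_exp assms[of "exp v"]] by simp

lemma kantorovich_op_asymptotic_expansion:
  assumes kernel: "is_kernel K" and moment1: "\<forall>u>0. alg_moment 1 K u = 0"
    and f': "\<And>x. x > 0 \<Longrightarrow> (f has_real_derivative \<theta>1 x / x) (at x)"
    and \<theta>1': "\<And>x. x > 0 \<Longrightarrow> (\<theta>1 has_real_derivative \<theta>2 x / x) (at x)"
    and \<theta>2_le: "\<And>x. x > 0 \<Longrightarrow> \<bar>\<theta>2 x\<bar> \<le> L"
  obtains C where
    "\<And>w x. w > 0 \<Longrightarrow> x > 0 \<Longrightarrow> \<bar>kantorovich_op K w f x - f x - \<theta>1 x / (2 * w)\<bar> \<le> C / w\<^sup>2"
proof -
  obtain M where moment2:
    "\<And>u. u > 0 \<Longrightarrow> (\<lambda>k::int. \<bar>K (exp (- of_int k) * u)\<bar> * ((of_int k - ln u)\<^sup>2 + 1)) summable_on UNIV"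
    "\<And>u. u > 0 \<Longrightarrow> infsum (\<lambda>k::int. \<bar>K (exp (- of_int k) * u)\<bar> * ((of_int k - ln u)\<^sup>2 + 1)) UNIV \<le> M"
    using kernel_abs_moment_bound[OF kernel] by blast
  define g where "g = (\<lambda>v. f (exp v))"
  have g': "(g has_real_derivative \<theta>1 (exp v)) (at v)" for v
    unfolding g_def by (rule has_real_derivative_comp_exp[OF f'])
  have g'': "((\<lambda>v. \<theta>1 (exp v)) has_real_derivative \<theta>2 (exp v)) (at v)" for v
    by (rule has_real_derivative_comp_exp[OF \<theta>1'])
  have "0 \<le> L"
    using \<theta>2_le[of 1] by linarith
  have "continuous_on UNIV g"
    using g' by (meson DERIV_isCont continuous_at_imp_continuous_on)
  have "\<bar>kantorovich_op K w f x - f x - \<theta>1 x / (2 * w)\<bar> \<le> 3 * (L / 2) * M / w\<^sup>2"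
    if w: "w > 0" and x: "x > 0" for w x
  proof -
    define t where "t = ln x"
    define u where "u = x powr w"
    have "u > 0" and ln_u: "ln u = w * t"
      using x by (simp_all add: u_def t_def ln_powr)
    have "\<bar>g v - g t - \<theta>1 x * (v - t)\<bar> \<le> L / 2 * (v - t)\<^sup>2" for v
      using taylor_second_order_bound[OF g' g'', of L v t] \<theta>2_le x by (simp add: t_def)
    from cell_average_approx[OF w _ \<open>continuous_on UNIV g\<close> this]
    have approx: "\<bar>w * integral {of_int k / w..(of_int k + 1) / w} g - (g t + \<theta>1 x / (2 * w))
        - \<theta>1 x / w * (of_int k - w * t)\<bar> \<le> 3 * (L / 2) / w\<^sup>2 * ((of_int k - w * t)\<^sup>2 + 1)" for k :: int
      using \<open>0 \<le> L\<close> by simp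
    have sum1: "((\<lambda>k. K (exp (- of_int k) * u)) has_sum 1) UNIV"
      using kernel \<open>u > 0\<close> by (simp add: is_kernel_def)
    have first_moment: "infsum (\<lambda>k. K (exp (- of_int k) * u) * (of_int k - w * t)) UNIV = 0"
      using moment1[rule_format, OF \<open>u > 0\<close>] by (simp add: alg_moment_def ln_u)
    have "0 \<le> 3 * (L / 2) / w\<^sup>2"
      using \<open>0 \<le> L\<close> by simp
    from infsum_weighted_affine_approx[OF sum1 first_moment moment2(1)[OF \<open>u > 0\<close>, unfolded ln_u]
        moment2(2)[OF \<open>u > 0\<close>, unfolded ln_u] approx this]
    have "\<bar>infsum (\<lambda>k. K (exp (- of_int k) * u) * (w * integral {of_int k / w..(of_int k + 1) / w} g)) UNIV
            - (g t + \<theta>1 x / (2 * w))\<bar> \<le> 3 * (L / 2) / w\<^sup>2 * M" .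
    then show ?thesis
      using x by (simp add: kantorovich_op_def g_def u_def t_def)
  qed
  then show ?thesis
    using that by blast
qed

lemma tendsto_scaled_expansion:
  fixes F :: "real \<Rightarrow> real"
  assumes "\<forall>\<^sub>F w in at_top. \<bar>F w - a / w\<bar> \<le> C / w\<^sup>2"
  shows "((\<lambda>w. w * F w) \<longlongrightarrow> a) at_top"
proof -
  have "((\<lambda>w. w * F w - a) \<longlongrightarrow> 0) at_top"
  proof (rule Lim_null_comparison)
    show "\<forall>\<^sub>F w in at_top. norm (w * F w - a) \<le> C / w"
      using assms eventually_gt_at_top[of 0]
    proof eventually_elim
      case (elim w)
      then have "\<bar>w * F w - a\<bar> = w * \<bar>F w - a / w\<bar>"
        by (simp add: abs_mult[symmetric] field_simps)
      also have "\<dots> \<le> w * (C / w\<^sup>2)"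
        using elim by (intro mult_left_mono) auto
      finally show ?case
        using elim by (simp add: power2_eq_square)
    qed
    show "((\<lambda>w. C / w) \<longlongrightarrow> 0) at_top"
      by (rule tendsto_divide_0[OF tendsto_const filterlim_at_top_imp_at_infinity[OF filterlim_ident]])
  qed
  then show ?thesis
    by (simp add: Lim_null[symmetric])
qed

lemma tendsto_scaled_zero:
  fixes F :: "real \<Rightarrow> real"
  assumes "\<forall>\<epsilon>>0. \<forall>\<^sub>F w in at_top. \<bar>F w\<bar> \<le> \<epsilon> / w"
  shows "((\<lambda>w. w * F w) \<longlongrightarrow> 0) at_top"
  unfolding tendsto_iff
proof (intro allI impI)
  fix e :: real
  assume "e > 0"
  with assms have "\<forall>\<^sub>F w in at_top. \<bar>F w\<bar> \<le> e / 2 / w"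
    by (metis half_gt_zero)
  then show "\<forall>\<^sub>F w in at_top. dist (w * F w) 0 < e"
    using eventually_gt_at_top[of 0]
  proof eventually_elim
    case (elim w)
    then have "\<bar>w * F w\<bar> \<le> e / 2"
      by (simp add: abs_mult field_simps)
    then show ?case
      using \<open>e > 0\<close> by simp
  qed
qed

lemma expansion_coefficient_eq_zero:
  fixes F :: "real \<Rightarrow> real"
  assumes "\<forall>\<^sub>F w in at_top. \<bar>F w - a / w\<bar> \<le> C / w\<^sup>2"
    and "\<forall>\<epsilon>>0. \<forall>\<^sub>F w in at_top. \<bar>F w\<bar> \<le> \<epsilon> / w"
  shows "a = 0"
  using tendsto_unique[OF trivial_limit_at_top_linorder
      tendsto_scaled_expansion[OF assms(1)] tendsto_scaled_zero[OF assms(2)]] .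

theorem theorem5:
  fixes K f :: "real \<Rightarrow> real"
  assumes "is_kernel K"
    and "\<forall>u>0. alg_moment 1 K u = 0"
    and "C2_mellin f"
    and "\<forall>\<epsilon>>0. \<forall>\<^sub>F w in at_top. \<forall>x>0. \<bar>kantorovich_op K w f x - f x\<bar> \<le> \<epsilon> / w"
  shows "\<exists>c. \<forall>x>0. f x = c"
proof -
  obtain \<theta>1 \<theta>2 L where f': "\<And>x. x > 0 \<Longrightarrow> (f has_real_derivative \<theta>1 x / x) (at x)"
    and \<theta>1': "\<And>x. x > 0 \<Longrightarrow> (\<theta>1 has_real_derivative \<theta>2 x / x) (at x)"
    and \<theta>2_le: "\<And>x. x > 0 \<Longrightarrow> \<bar>\<theta>2 x\<bar> \<le> L"
    using assms(3) unfolding C2_mellin_def bcont_pos_def by blast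
  obtain C where expansion:
    "\<And>w x. w > 0 \<Longrightarrow> x > 0 \<Longrightarrow> \<bar>kantorovich_op K w f x - f x - \<theta>1 x / (2 * w)\<bar> \<le> C / w\<^sup>2"
    using kantorovich_op_asymptotic_expansion[OF assms(1,2) f' \<theta>1' \<theta>2_le] by blast
  have "\<theta>1 x / 2 = 0" if "x > 0" for x
  proof (rule expansion_coefficient_eq_zero)
    show "\<forall>\<^sub>F w in at_top. \<bar>kantorovich_op K w f x - f x - \<theta>1 x / 2 / w\<bar> \<le> C / w\<^sup>2"
      using eventually_gt_at_top[of 0] by eventually_elim (use expansion \<open>x > 0\<close> in simp)
    show "\<forall>\<epsilon>>0. \<forall>\<^sub>F w in at_top. \<bar>kantorovich_op K w f x - f x\<bar> \<le> \<epsilon> / w"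
      using assms(4) \<open>x > 0\<close> by (blast intro: eventually_mono)
  qed
  then have "(f has_field_derivative 0) (at x within {0<..})" if "x > 0" for x
    using f'[OF that] that by (simp add: has_field_derivative_at_within)
  then show ?thesis
    using has_field_derivative_zero_constant[of "{0<..}" f] by auto
qed

end
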